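(* The centralizer of $L_0$ in the ring $\mathcal D$ of ordinary differential operators with coefficients in $\mathbb C(x)$ is the polynomial ring $\mathbb C[L_0]$. In particular $L_0$ has true rank $r$.
   Context: Fix an integer $r>1$ and constants $a_1,\dots,a_{r-2}\in\mathbb C$, and let $L_0=\partial^r-a_{r-2}\partial^{r-2}-\cdots-a_1\partial-x$, where $\partial=d/dx$. The rank of a set of ordinary differential operators is the greatest common divisor of the orders of its elements. The true rank of an ordinary differential operator is the rank of its centralizer in the ring of ordinary differential operators. *)

theory Defs
  imports "HOL-Computational_Algebra.Polynomial"
          "HOL-Computational_Algebra.Normalized_Fraction"
          "HOL-Computational_Algebra.Polynomial_Factorial"
          "HOL-Computational_Algebra.Field_as_Ring"
begin

type_synonym rfun = "complex poly fract"

definition rconst :: "complex \<Rightarrow> rfun" where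
  "rconst c = Fract [:c:] 1"

definition rx :: rfun where
  "rx = Fract [:0, 1:] 1"

definition rderiv :: "rfun \<Rightarrow> rfun" where
  "rderiv f = (case quot_of_fract f of (p, q) \<Rightarrow>
       Fract (pderiv p * q - p * pderiv q) (q * q))"

text \<open>Ordinary differential operators with coefficients in C(x):
  an operator sum_i a_i \<partial>^i is represented by the polynomial with coefficients a_i
  (coefficient i = coefficient of \<partial>^i); its order is the degree.
  Multiplication is composition of operators, given by the Leibniz rule
  (a \<partial>^i)(b \<partial>^j) = sum_k (i choose k) a b^(k) \<partial>^(i+j-k).\<close>
type_synonym dop = "rfun poly"

definition dmult :: "dop \<Rightarrow> dop \<Rightarrow> dop" where
  "dmult A B = (\<Sum>i\<le>degree A. \<Sum>j\<le>degree B. \<Sum>k\<le>i.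
       monom (coeff A i * of_nat (i choose k) * (rderiv ^^ k) (coeff B j)) (i + j - k))"

definition dpow :: "dop \<Rightarrow> nat \<Rightarrow> dop" where
  "dpow L n = (dmult L ^^ n) 1"

definition dord :: "dop \<Rightarrow> nat" where
  "dord L = degree L"

definition deval :: "complex poly \<Rightarrow> dop \<Rightarrow> dop" where
  "deval p L = (\<Sum>k\<le>degree p. smult (rconst (coeff p k)) (dpow L k))"

definition centralizer :: "dop \<Rightarrow> dop set" where
  "centralizer L = {M. dmult M L = dmult L M}"

definition op_rank :: "dop set \<Rightarrow> nat" where
  "op_rank S = Gcd (dord ` S)"

definition true_rank :: "dop \<Rightarrow> nat" where
  "true_rank L = op_rank (centralizer L)"

definition L0 :: "nat \<Rightarrow> (nat \<Rightarrow> complex) \<Rightarrow> dop" where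
  "L0 r a = monom 1 r - (\<Sum>k\<in>{1..r-2}. monom (rconst (a k)) k) - [:rx:]"

end

theory Submission
  imports Defs "HOL-Computational_Algebra.Fundamental_Theorem_Algebra"
begin

text \<open>
  Operators act on C(x), and faithfully already on C[x]. At a pole of f the term \<partial>^r of L0
  dominates, because all coefficients of L0 are polynomials, so L0 f has a pole of order exactly
  r higher. If M commutes with L0 then M (L0^k 1) = L0^k (M 1); the left side has poles of
  bounded order because L0^k 1 is a polynomial, so M 1 has no poles at all and is a polynomial.
  Since L0 raises degrees of polynomials by exactly one, the L0^k 1 span C[x], whence
  M 1 = c(L0) 1 for some c in C[t]. Then M - c(L0) commutes with L0 and kills 1, hence kills
  every L0^k 1, hence all of C[x], so M = c(L0). Finally c(L0) has order r * deg c.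
\<close>

lemma Fract_eq_0_iff: "q \<noteq> 0 \<Longrightarrow> Fract p q = (0::rfun) \<longleftrightarrow> p = 0"
  by (simp add: eq_fract(1)[of q 1] fract_expand(1))

lemma sum_Fract_1: "(\<Sum>x\<in>S. Fract (f x) 1) = (Fract (\<Sum>x\<in>S. f x) 1 :: rfun)"
  by (induction S rule: infinite_finite_induct) (simp_all add: fract_collapse)

lemma rconst_add: "rconst (x + y) = rconst x + rconst y"
  by (simp add: rconst_def)

lemma rconst_eq_0_iff [simp]: "rconst c = 0 \<longleftrightarrow> c = 0"
  by (simp add: rconst_def Fract_eq_0_iff)

section \<open>The derivation of C(x)\<close>

lemma rderiv_Fract:
  assumes "q \<noteq> 0"
  shows "rderiv (Fract p q) = Fract (pderiv p * q - p * pderiv q) (q * q)"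
proof -
  obtain p0 q0 where pq0: "quot_of_fract (Fract p q) = (p0, q0)"
    by (cases "quot_of_fract (Fract p q)")
  have q0: "q0 \<noteq> 0" using snd_quot_of_fract_nonzero[of "Fract p q"] pq0 by simp
  have "Fract p0 q0 = Fract p q" using Fract_quot_of_fract[of "Fract p q"] pq0 by simp
  hence e: "p0 * q = p * q0" using assms q0 by (simp add: eq_fract)
  hence "pderiv p0 * q + p0 * pderiv q = pderiv p * q0 + p * pderiv q0"
    by (metis pderiv_mult mult.commute add.commute)
  hence "(pderiv p0 * q0 - p0 * pderiv q0) * (q * q) = (pderiv p * q - p * pderiv q) * (q0 * q0)"
    using e by algebra
  thus ?thesis using assms q0 pq0 unfolding rderiv_def by (simp add: eq_fract)
qed

lemma rderiv_Fract_1: "rderiv (Fract p 1) = Fract (pderiv p) 1"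
  by (simp add: rderiv_Fract)

lemma rderiv_add: "rderiv (f + g) = rderiv f + rderiv g"
  by (cases f; cases g) (simp add: rderiv_Fract eq_fract pderiv_add pderiv_mult algebra_simps)

lemma rderiv_mult: "rderiv (f * g) = rderiv f * g + f * rderiv g"
  by (cases f; cases g) (simp add: rderiv_Fract eq_fract pderiv_add pderiv_mult algebra_simps)

lemma rderiv_0 [simp]: "rderiv 0 = 0"
  using rderiv_Fract_1[of 0] by (simp add: fract_collapse)

lemma rderiv_1 [simp]: "rderiv 1 = 0"
  using rderiv_Fract_1[of 1] by (simp add: fract_collapse)

lemma rderiv_uminus: "rderiv (- f) = - rderiv f"
  by (metis add.right_inverse minus_unique rderiv_0 rderiv_add)

lemma rderiv_diff: "rderiv (f - g) = rderiv f - rderiv g"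
  using rderiv_add[of f "- g"] by (simp add: rderiv_uminus)

lemma rderiv_rconst [simp]: "rderiv (rconst c) = 0"
  by (simp add: rconst_def rderiv_Fract_1 fract_collapse)

lemma rderiv_of_nat [simp]: "rderiv (of_nat n) = 0"
  by (induction n) (simp_all add: rderiv_add)

lemma rderiv_sum: "rderiv (\<Sum>x\<in>A. f x) = (\<Sum>x\<in>A. rderiv (f x))"
  by (induction A rule: infinite_finite_induct) (simp_all add: rderiv_add)

lemma higher_rderiv_0 [simp]: "(rderiv ^^ n) 0 = 0"
  by (induction n) simp_all

lemma higher_rderiv_add: "(rderiv ^^ n) (f + g) = (rderiv ^^ n) f + (rderiv ^^ n) g"
  by (induction n) (simp_all add: rderiv_add)

lemma higher_rderiv_diff: "(rderiv ^^ n) (f - g) = (rderiv ^^ n) f - (rderiv ^^ n) g"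
  by (induction n) (simp_all add: rderiv_diff)

lemma higher_rderiv_sum: "(rderiv ^^ n) (\<Sum>x\<in>A. f x) = (\<Sum>x\<in>A. (rderiv ^^ n) (f x))"
  by (induction A rule: infinite_finite_induct) (simp_all add: higher_rderiv_add)

lemma higher_rderiv_rconst_mult: "(rderiv ^^ n) (rconst c * f) = rconst c * (rderiv ^^ n) f"
  by (induction n) (simp_all add: rderiv_mult)

lemma higher_rderiv_Fract_1: "(rderiv ^^ n) (Fract p 1) = Fract ((pderiv ^^ n) p) 1"
  by (induction n) (simp_all add: rderiv_Fract_1)

lemma sum_choose_Suc:
  fixes h :: "nat \<Rightarrow> nat \<Rightarrow> 'a::comm_semiring_1"
  shows "(\<Sum>i\<le>Suc n. of_nat (Suc n choose i) * h i (Suc n - i))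
       = (\<Sum>i\<le>n. of_nat (n choose i) * (h (Suc i) (n - i) + h i (Suc (n - i))))"
proof -
  have "(\<Sum>i\<le>Suc n. of_nat (Suc n choose i) * h i (Suc n - i))
      = (\<Sum>i\<le>n. of_nat (n choose i) * h (Suc i) (n - i))
        + (h 0 (Suc n) + (\<Sum>i\<le>n. of_nat (n choose Suc i) * h (Suc i) (n - i)))"
    by (simp only: sum.atMost_Suc_shift binomial_Suc_Suc of_nat_add distrib_right sum.distrib)
       (simp add: algebra_simps)
  also have "h 0 (Suc n) + (\<Sum>i\<le>n. of_nat (n choose Suc i) * h (Suc i) (n - i))
      = (\<Sum>i\<le>Suc n. of_nat (n choose i) * h i (Suc n - i))"
    by (simp only: sum.atMost_Suc_shift) simp
  also have "\<dots> = (\<Sum>i\<le>n. of_nat (n choose i) * h i (Suc (n - i)))"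
    by (auto simp: Suc_diff_le binomial_eq_0 intro!: sum.cong)
  finally show ?thesis by (simp add: sum.distrib algebra_simps)
qed

lemma higher_rderiv_mult:
  "(rderiv ^^ n) (f * g) = (\<Sum>i\<le>n. of_nat (n choose i) * (rderiv ^^ i) f * (rderiv ^^ (n - i)) g)"
proof (induction n)
  case (Suc n)
  have "(rderiv ^^ Suc n) (f * g)
      = (\<Sum>i\<le>n. of_nat (n choose i) * rderiv ((rderiv ^^ i) f * (rderiv ^^ (n - i)) g))"
    by (simp add: Suc rderiv_sum rderiv_mult algebra_simps)
  also have "\<dots> = (\<Sum>i\<le>Suc n. of_nat (Suc n choose i) * ((rderiv ^^ i) f * (rderiv ^^ (Suc n - i)) g))"
    by (subst sum_choose_Suc) (simp add: rderiv_mult)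
  finally show ?case by (simp add: mult.assoc)
qed simp

section \<open>Operators acting on C(x)\<close>

definition dapply :: "dop \<Rightarrow> rfun \<Rightarrow> rfun" where
  "dapply A f = (\<Sum>i\<le>degree A. coeff A i * (rderiv ^^ i) f)"

lemma dapply_eq_sum:
  assumes "degree A \<le> N"
  shows "dapply A f = (\<Sum>i\<le>N. coeff A i * (rderiv ^^ i) f)"
  unfolding dapply_def
  by (rule sum.mono_neutral_left) (use assms in \<open>auto simp: coeff_eq_0\<close>)

lemma dapply_0 [simp]: "dapply 0 f = 0"
  by (simp add: dapply_def)

lemma dapply_add: "dapply (A + B) f = dapply A f + dapply B f"
proof -
  define N where "N = max (degree A) (degree B)"
  have "degree (A + B) \<le> N" "degree A \<le> N" "degree B \<le> N"
    by (auto simp: N_def degree_add_le)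
  thus ?thesis by (simp add: dapply_eq_sum[of _ N] sum.distrib algebra_simps)
qed

lemma dapply_uminus: "dapply (- A) f = - dapply A f"
  by (simp add: dapply_def sum_negf)

lemma dapply_diff: "dapply (A - B) f = dapply A f - dapply B f"
  using dapply_add[of A "- B" f] by (simp add: dapply_uminus)

lemma dapply_sum: "dapply (\<Sum>x\<in>S. A x) f = (\<Sum>x\<in>S. dapply (A x) f)"
  by (induction S rule: infinite_finite_induct) (simp_all add: dapply_add)

lemma dapply_monom: "dapply (monom c n) f = c * (rderiv ^^ n) f"
proof -
  have "dapply (monom c n) f = (\<Sum>i\<le>n. if n = i then c * (rderiv ^^ i) f else 0)"
    unfolding dapply_eq_sum[OF degree_monom_le] by (intro sum.cong) (auto simp: coeff_monom)
  thus ?thesis by simp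
qed

lemma dapply_1 [simp]: "dapply 1 f = f"
  using dapply_monom[of 1 0 f] by (simp add: monom_0 one_pCons)

lemma dapply_smult: "dapply (smult c A) f = c * dapply A f"
  by (simp add: dapply_eq_sum[of _ "degree A"] dapply_def sum_distrib_left mult.assoc)

lemma dapply_add_right: "dapply A (f + g) = dapply A f + dapply A g"
  by (simp add: dapply_def higher_rderiv_add sum.distrib algebra_simps)

lemma dapply_0_right [simp]: "dapply A 0 = 0"
  by (simp add: dapply_def)

lemma dapply_diff_right: "dapply A (f - g) = dapply A f - dapply A g"
  by (simp add: dapply_def higher_rderiv_diff sum_subtractf algebra_simps)

lemma dapply_sum_right: "dapply A (\<Sum>x\<in>S. f x) = (\<Sum>x\<in>S. dapply A (f x))"
  by (induction S rule: infinite_finite_induct) (simp_all add: dapply_add_right)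

lemma dapply_rconst_mult_right: "dapply A (rconst c * f) = rconst c * dapply A f"
  unfolding dapply_def higher_rderiv_rconst_mult sum_distrib_left by (simp add: algebra_simps)

lemma dapply_dmult: "dapply (dmult A B) f = dapply A (dapply B f)"
proof -
  have shift: "(rderiv ^^ (i + j - k)) f = (rderiv ^^ (i - k)) ((rderiv ^^ j) f)" if "k \<le> i" for i j k
  proof -
    have "i + j - k = (i - k) + j" using that by simp
    thus ?thesis by (simp only: funpow_add o_apply)
  qed
  have "dapply (dmult A B) f = (\<Sum>i\<le>degree A. \<Sum>j\<le>degree B. \<Sum>k\<le>i.
       coeff A i * of_nat (i choose k) * (rderiv ^^ k) (coeff B j) * (rderiv ^^ (i + j - k)) f)"
    by (simp add: dmult_def dapply_sum dapply_monom)
  also have "\<dots> = (\<Sum>i\<le>degree A. coeff A i * (\<Sum>j\<le>degree B. \<Sum>k\<le>i.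
       of_nat (i choose k) * (rderiv ^^ k) (coeff B j) * (rderiv ^^ (i - k)) ((rderiv ^^ j) f)))"
    by (simp add: shift sum_distrib_left mult.assoc)
  also have "\<dots> = dapply A (dapply B f)"
    by (simp add: dapply_def higher_rderiv_sum higher_rderiv_mult)
  finally show ?thesis .
qed

lemma dapply_dpow: "dapply (dpow L k) f = (dapply L ^^ k) f"
  by (induction k arbitrary: f) (simp_all add: dpow_def dapply_dmult)

lemma dapply_deval: "dapply (deval c L) f = (\<Sum>k\<le>degree c. rconst (coeff c k) * (dapply L ^^ k) f)"
  by (simp add: deval_def dapply_sum dapply_smult dapply_dpow)

lemma higher_pderiv_monom_1_gt: "n < m \<Longrightarrow> (pderiv ^^ m) (monom (1::complex) n) = 0"
  by (rule poly_eqI) (simp add: coeff_higher_pderiv coeff_monom)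

lemma higher_pderiv_monom_1_eq: "(pderiv ^^ n) (monom (1::complex) n) = [:fact n:]"
  by (rule poly_eqI) (auto simp: coeff_higher_pderiv coeff_monom pochhammer_fact coeff_pCons split: nat.split)

lemma dop_eqI_poly:
  assumes "\<And>p. dapply A (Fract p 1) = dapply B (Fract p 1)"
  shows "A = B"
proof -
  define D where "D = A - B"
  have D: "dapply D (Fract p 1) = 0" for p
    using assms by (simp add: D_def dapply_diff)
  have "coeff D n = 0" for n
  proof (induction n rule: less_induct)
    case (less n)
    have "coeff D i * Fract ((pderiv ^^ i) (monom 1 n)) 1 = (if i = n then coeff D n * rconst (fact n) else 0)"
      for i
      using less[of i] higher_pderiv_monom_1_gt[of n i]
      by (cases i n rule: linorder_cases) (auto simp: higher_pderiv_monom_1_eq rconst_def fract_collapse)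
    hence "dapply D (Fract (monom 1 n) 1) = coeff D n * rconst (fact n)"
      by (simp add: dapply_eq_sum[of D "max (degree D) n"] higher_rderiv_Fract_1)
    thus ?case using D by simp
  qed
  thus ?thesis by (simp add: D_def poly_eq_iff)
qed

section \<open>Valuations of C(x) at a point\<close>

definition val :: "complex \<Rightarrow> rfun \<Rightarrow> int" where
  "val \<alpha> f = int (order \<alpha> (fst (quot_of_fract f))) - int (order \<alpha> (snd (quot_of_fract f)))"

lemma val_Fract:
  assumes "p \<noteq> 0" "q \<noteq> 0"
  shows "val \<alpha> (Fract p q) = int (order \<alpha> p) - int (order \<alpha> q)"
proof -
  obtain p0 q0 where pq0: "quot_of_fract (Fract p q) = (p0, q0)"
    by (cases "quot_of_fract (Fract p q)")
  have q0: "q0 \<noteq> 0" using snd_quot_of_fract_nonzero[of "Fract p q"] pq0 by simp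
  have p0: "p0 \<noteq> 0"
    using fst_quot_of_fract_eq_0_iff[of "Fract p q"] pq0 assms by (simp add: Fract_eq_0_iff)
  have "Fract p0 q0 = Fract p q" using Fract_quot_of_fract[of "Fract p q"] pq0 by simp
  hence "p0 * q = p * q0" using assms q0 by (simp add: eq_fract)
  hence "order \<alpha> p0 + order \<alpha> q = order \<alpha> p + order \<alpha> q0"
    using order_mult[of p0 q \<alpha>] order_mult[of p q0 \<alpha>] assms p0 q0 by simp
  thus ?thesis using pq0 by (simp add: val_def)
qed

lemma val_Fract_linear_factors:
  assumes "poly p \<alpha> \<noteq> 0" "poly q \<alpha> \<noteq> 0"
  shows "val \<alpha> (Fract ([:-\<alpha>, 1:] ^ m * p) ([:-\<alpha>, 1:] ^ n * q)) = int m - int n"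
proof -
  have "p \<noteq> 0" "q \<noteq> 0" using assms by auto
  thus ?thesis using assms by (simp add: val_Fract order_mult order_power_n_n order_0I)
qed

lemma val_mult:
  assumes "f \<noteq> 0" "g \<noteq> 0"
  shows "val \<alpha> (f * g) = val \<alpha> f + val \<alpha> g"
proof (cases f; cases g)
  fix p q p' q' assume f: "f = Fract p q" "q \<noteq> 0" and g: "g = Fract p' q'" "q' \<noteq> 0"
  have "p \<noteq> 0" "p' \<noteq> 0" using assms f g by (auto simp: Fract_eq_0_iff)
  thus ?thesis using f g by (simp add: val_Fract order_mult)
qed

lemma val_uminus [simp]: "val \<alpha> (- f) = val \<alpha> f"
proof (cases f)
  fix p q assume f: "f = Fract p q" "q \<noteq> 0"
  thus ?thesis by (cases "p = 0") (simp_all add: val_Fract)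
qed

lemma val_add:
  assumes "f \<noteq> 0" "g \<noteq> 0" "f + g \<noteq> 0"
  shows "min (val \<alpha> f) (val \<alpha> g) \<le> val \<alpha> (f + g)"
proof (cases f; cases g)
  fix p q p' q' assume f: "f = Fract p q" "q \<noteq> 0" and g: "g = Fract p' q'" "q' \<noteq> 0"
  have nz: "p \<noteq> 0" "p' \<noteq> 0" "p * q' + p' * q \<noteq> 0"
    using assms f g by (auto simp: Fract_eq_0_iff)
  let ?m = "min (order \<alpha> (p * q')) (order \<alpha> (p' * q))"
  have "[:-\<alpha>, 1:] ^ ?m dvd p * q' + p' * q"
    by (intro dvd_add) (auto simp: order_divides)
  hence "?m \<le> order \<alpha> (p * q' + p' * q)" using nz by (simp add: order_divides)
  thus ?thesis using f g nz by (simp add: val_Fract order_mult)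
qed

lemma val_add_eq_left:
  assumes "f \<noteq> 0" "g \<noteq> 0" "val \<alpha> f < val \<alpha> g"
  shows "f + g \<noteq> 0 \<and> val \<alpha> (f + g) = val \<alpha> f"
proof -
  have nz: "f + g \<noteq> 0"
    using assms by (metis add_eq_0_iff val_uminus order.irrefl)
  have "min (val \<alpha> f) (val \<alpha> g) \<le> val \<alpha> (f + g)"
    by (rule val_add) (use assms nz in auto)
  moreover have "min (val \<alpha> (f + g)) (val \<alpha> (- g)) \<le> val \<alpha> (f + g + - g)"
    by (rule val_add) (use assms nz in auto)
  ultimately show ?thesis using nz assms by auto
qed

lemma Fract_decomp_at:
  assumes "f \<noteq> 0"
  obtains p q m n where "f = Fract ([:-\<alpha>, 1:] ^ m * p) ([:-\<alpha>, 1:] ^ n * q)"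
    and "poly p \<alpha> \<noteq> 0" "poly q \<alpha> \<noteq> 0"
proof -
  obtain p q where f: "f = Fract p q" and q: "q \<noteq> 0" by (cases f)
  have "p \<noteq> 0" using assms f by (auto simp: fract_collapse)
  then obtain p1 q1 where "p = [:-\<alpha>, 1:] ^ order \<alpha> p * p1" "\<not> [:-\<alpha>, 1:] dvd p1"
    and "q = [:-\<alpha>, 1:] ^ order \<alpha> q * q1" "\<not> [:-\<alpha>, 1:] dvd q1"
    using order_decomp q by metis
  thus ?thesis using that f by (metis poly_eq_0_iff_dvd)
qed

lemma val_rderiv_pole:
  assumes "f \<noteq> 0" "val \<alpha> f < 0"
  shows "rderiv f \<noteq> 0 \<and> val \<alpha> (rderiv f) = val \<alpha> f - 1"
proof -
  define u where "u = [:-\<alpha>, 1:]"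
  obtain p q m n where f: "f = Fract (u ^ m * p) (u ^ n * q)"
    and roots: "poly p \<alpha> \<noteq> 0" "poly q \<alpha> \<noteq> 0"
    using Fract_decomp_at[OF assms(1)] u_def by metis
  have "m < n" using assms(2) f roots by (simp add: val_Fract_linear_factors u_def)
  then obtain T' where "n = m + Suc T'" using less_iff_Suc_add by auto
  define T where "T = Suc T'"
  define w where "w = u ^ T * q"
  have "f = Fract (u ^ m * p) (u ^ m * w)" using f \<open>n = m + Suc T'\<close>
    by (simp add: w_def T_def power_add ac_simps)
  hence f': "f = Fract (u ^ 0 * p) w" by (simp add: mult_fract_cancel u_def)
  \<comment> \<open>the lowest pole term gets multiplied by -T, which is nonzero in characteristic 0\<close>
  define R where "R = u * pderiv p * q - smult (of_nat T) (p * q) - u * p * pderiv q"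
  have R: "poly R \<alpha> \<noteq> 0" using roots by (simp add: R_def u_def T_def del: of_nat_Suc)
  have "pderiv (u ^ Suc T') = smult (of_nat (Suc T')) (u ^ T')"
    by (simp only: pderiv_power_Suc) (simp add: u_def pderiv_pCons)
  hence "pderiv p * w - p * pderiv w = u ^ T' * R"
    unfolding w_def R_def T_def by (simp only: pderiv_mult) (simp add: algebra_simps)
  moreover have "w \<noteq> 0" using roots by (auto simp: w_def u_def)
  moreover have "w * w = u ^ (T + T) * (q * q)" by (simp add: w_def power_add algebra_simps)
  ultimately have f'': "rderiv f = Fract (u ^ T' * R) (u ^ (T + T) * (q * q))"
    using f' by (simp add: rderiv_Fract)
  have "R \<noteq> 0" "q \<noteq> 0" using R roots by auto
  hence "rderiv f \<noteq> 0" using f'' by (simp add: Fract_eq_0_iff u_def)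
  moreover have "val \<alpha> f = - int T"
    using f' val_Fract_linear_factors[OF roots, of 0 T] by (simp add: w_def u_def)
  moreover have "val \<alpha> (rderiv f) = int T' - int (T + T)"
    using f'' val_Fract_linear_factors[of R \<alpha> "q * q" T' "T + T"] R roots by (simp add: u_def)
  ultimately show ?thesis by (simp add: T_def)
qed

definition val_ge :: "complex \<Rightarrow> int \<Rightarrow> rfun \<Rightarrow> bool" where
  "val_ge \<alpha> B f \<longleftrightarrow> f = 0 \<or> B \<le> val \<alpha> f"

lemma val_ge_0 [simp]: "val_ge \<alpha> B 0"
  by (simp add: val_ge_def)

lemma val_ge_mono: "B' \<le> B \<Longrightarrow> val_ge \<alpha> B f \<Longrightarrow> val_ge \<alpha> B' f"
  by (auto simp: val_ge_def)

lemma val_ge_self: "val_ge \<alpha> (val \<alpha> f) f"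
  by (simp add: val_ge_def)

lemma val_ge_add: "val_ge \<alpha> B f \<Longrightarrow> val_ge \<alpha> B g \<Longrightarrow> val_ge \<alpha> B (f + g)"
  using val_add[of f g \<alpha>] by (force simp: val_ge_def)

lemma val_ge_sum: "(\<And>x. x \<in> S \<Longrightarrow> val_ge \<alpha> B (f x)) \<Longrightarrow> val_ge \<alpha> B (\<Sum>x\<in>S. f x)"
  by (induction S rule: infinite_finite_induct) (auto intro!: val_ge_add)

lemma val_ge_mult: "val_ge \<alpha> B f \<Longrightarrow> val_ge \<alpha> B' g \<Longrightarrow> val_ge \<alpha> (B + B') (f * g)"
  by (cases "f = 0 \<or> g = 0") (auto simp: val_ge_def val_mult)

lemma val_ge_Fract_1: "val_ge \<alpha> 0 (Fract p 1)"
  by (cases "p = 0") (auto simp: val_ge_def val_Fract fract_collapse)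

lemma poly_if_val_ge_0:
  assumes "\<And>\<alpha>. val_ge \<alpha> 0 f"
  shows "\<exists>q. f = Fract q 1"
proof -
  obtain p q where pq: "quot_of_fract f = (p, q)" by (cases "quot_of_fract f")
  have f: "f = Fract p q" using Fract_quot_of_fract[of f] pq by simp
  have q: "q \<noteq> 0" using snd_quot_of_fract_nonzero[of f] pq by simp
  have cop: "coprime p q" using coprime_quot_of_fract[of f] pq by simp
  have "degree q = 0"
  proof (rule ccontr)
    assume "degree q \<noteq> 0"
    then obtain \<alpha> where root: "poly q \<alpha> = 0" using alg_closed_imp_poly_has_root by blast
    have "poly p \<alpha> \<noteq> 0"
    proof
      assume "poly p \<alpha> = 0"
      hence "is_unit [:-\<alpha>, 1:]" using root cop by (meson coprime_common_divisor poly_eq_0_iff_dvd)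
      thus False by (simp add: is_unit_poly_iff)
    qed
    hence "p \<noteq> 0" "order \<alpha> p = 0" "order \<alpha> q \<noteq> 0" using root q by (auto simp: order_0I order_root)
    hence "val \<alpha> f < 0" "f \<noteq> 0" using f q by (auto simp: val_Fract Fract_eq_0_iff)
    thus False using assms[of \<alpha>] by (simp add: val_ge_def)
  qed
  then obtain c where "q = [:c:]" "c \<noteq> 0" using q by (metis degree_eq_zeroE pCons_eq_0_iff)
  hence "f = Fract (smult (inverse c) p) 1" using f by (simp add: eq_fract)
  thus ?thesis by blast
qed

lemma higher_rderiv_val_pole:
  assumes "f \<noteq> 0" "val \<alpha> f < 0"
  shows "(rderiv ^^ k) f \<noteq> 0 \<and> val \<alpha> ((rderiv ^^ k) f) = val \<alpha> f - int k"
proof (induction k)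
  case (Suc k)
  thus ?case using val_rderiv_pole[of "(rderiv ^^ k) f" \<alpha>] assms by simp
qed (use assms in simp)

definition has_poly_coeffs :: "dop \<Rightarrow> bool" where
  "has_poly_coeffs L \<longleftrightarrow> (\<forall>i. \<exists>p. coeff L i = Fract p 1)"

lemma has_poly_coeffs_0: "has_poly_coeffs 0"
  unfolding has_poly_coeffs_def by (metis coeff_0 fract_collapse(1))

lemma has_poly_coeffs_add: "has_poly_coeffs A \<Longrightarrow> has_poly_coeffs B \<Longrightarrow> has_poly_coeffs (A + B)"
  unfolding has_poly_coeffs_def by (metis coeff_add add_fract mult_1 one_neq_zero)

lemma has_poly_coeffs_diff: "has_poly_coeffs A \<Longrightarrow> has_poly_coeffs B \<Longrightarrow> has_poly_coeffs (A - B)"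
  unfolding has_poly_coeffs_def by (metis coeff_diff diff_fract mult_1 one_neq_zero)

lemma has_poly_coeffs_sum: "(\<And>x. x \<in> S \<Longrightarrow> has_poly_coeffs (A x)) \<Longrightarrow> has_poly_coeffs (\<Sum>x\<in>S. A x)"
  by (induction S rule: infinite_finite_induct) (auto intro: has_poly_coeffs_0 has_poly_coeffs_add)

lemma has_poly_coeffs_monom: "has_poly_coeffs (monom (Fract p 1) n)"
  unfolding has_poly_coeffs_def by (metis coeff_monom fract_collapse(1))

lemma val_ge_coeff_if_has_poly_coeffs: "has_poly_coeffs L \<Longrightarrow> val_ge \<alpha> 0 (coeff L i)"
  by (metis has_poly_coeffs_def val_ge_Fract_1)

lemma val_dapply_pole:
  assumes "lead_coeff L = 1" "has_poly_coeffs L" "f \<noteq> 0" "val \<alpha> f < 0"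
  shows "dapply L f \<noteq> 0 \<and> val \<alpha> (dapply L f) = val \<alpha> f - int (degree L)"
proof -
  define n where "n = degree L"
  define H where "H = (\<Sum>i<n. coeff L i * (rderiv ^^ i) f)"
  have L: "dapply L f = (rderiv ^^ n) f + H"
    using assms(1) by (simp add: dapply_def H_def n_def lessThan_Suc_atMost[symmetric])
  have top: "(rderiv ^^ n) f \<noteq> 0" "val \<alpha> ((rderiv ^^ n) f) = val \<alpha> f - int n"
    using higher_rderiv_val_pole[OF assms(3,4)] by auto
  have terms: "val_ge \<alpha> (0 + (val \<alpha> f - int i)) (coeff L i * (rderiv ^^ i) f)" for i
    using higher_rderiv_val_pole[OF assms(3,4), of i]
    by (intro val_ge_mult val_ge_coeff_if_has_poly_coeffs assms(2)) (simp add: val_ge_def)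
  hence lower: "val_ge \<alpha> (val \<alpha> f - int n + 1) H"
    unfolding H_def by (intro val_ge_sum) (auto intro: val_ge_mono[OF _ terms])
  show ?thesis
  proof (cases "H = 0")
    case True
    thus ?thesis using L top by (simp add: n_def)
  next
    case False
    hence "val \<alpha> ((rderiv ^^ n) f) < val \<alpha> H" using lower top by (simp add: val_ge_def)
    thus ?thesis using L top val_add_eq_left[of "(rderiv ^^ n) f" H \<alpha>] False by (simp add: n_def)
  qed
qed

lemma funpow_dapply_val_pole:
  assumes "lead_coeff L = 1" "has_poly_coeffs L" "f \<noteq> 0" "val \<alpha> f < 0"
  shows "(dapply L ^^ k) f \<noteq> 0 \<and> val \<alpha> ((dapply L ^^ k) f) = val \<alpha> f - int k * int (degree L)"
proof (induction k)
  case (Suc k)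
  have IH: "(dapply L ^^ k) f \<noteq> 0" "val \<alpha> ((dapply L ^^ k) f) = val \<alpha> f - int k * int (degree L)"
    using Suc by auto
  have "0 \<le> int k * int (degree L)" by simp
  hence "val \<alpha> ((dapply L ^^ k) f) < 0" using IH(2) assms(4) by linarith
  with val_dapply_pole[OF assms(1,2) IH(1) this] IH(2) show ?case by (simp add: algebra_simps)
qed (use assms in simp)

lemma val_ge_dapply_Fract_1: "\<exists>B\<le>0. \<forall>p. val_ge \<alpha> B (dapply M (Fract p 1))"
proof -
  define B where "B = Min (insert 0 ((\<lambda>i. val \<alpha> (coeff M i)) ` {..degree M}))"
  have "val_ge \<alpha> B (coeff M i * (rderiv ^^ i) (Fract p 1))" if "i \<le> degree M" for i p
  proof -
    have "val_ge \<alpha> (val \<alpha> (coeff M i) + 0) (coeff M i * (rderiv ^^ i) (Fract p 1))"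
      by (intro val_ge_mult) (auto simp: val_ge_self higher_rderiv_Fract_1 val_ge_Fract_1)
    moreover have "B \<le> val \<alpha> (coeff M i)" unfolding B_def by (rule Min_le) (use that in auto)
    ultimately show ?thesis by (auto elim: val_ge_mono[rotated])
  qed
  moreover have "B \<le> 0" unfolding B_def by (rule Min_le) auto
  ultimately show ?thesis unfolding dapply_def by (blast intro: val_ge_sum)
qed

section \<open>The centralizer\<close>

lemma deval_eq_sum:
  assumes "degree c \<le> N"
  shows "deval c L = (\<Sum>k\<le>N. smult (rconst (coeff c k)) (dpow L k))"
  unfolding deval_def
  by (rule sum.mono_neutral_left) (use assms in \<open>auto simp: coeff_eq_0\<close>)

lemma deval_add: "deval (c + d) L = deval c L + deval d L"
proof -
  define N where "N = max (degree c) (degree d)"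
  have "degree (c + d) \<le> N" "degree c \<le> N" "degree d \<le> N"
    by (auto simp: N_def degree_add_le)
  thus ?thesis by (simp add: deval_eq_sum[of _ N] rconst_add smult_add_left sum.distrib)
qed

lemma deval_monom: "deval (monom x n) L = smult (rconst x) (dpow L n)"
proof -
  have "deval (monom x n) L = (\<Sum>k\<le>n. if n = k then smult (rconst x) (dpow L k) else 0)"
    unfolding deval_eq_sum[OF degree_monom_le] by (intro sum.cong) (auto simp: coeff_monom)
  thus ?thesis by simp
qed

lemma dapply_deval_commute: "dapply (deval c L) (dapply L f) = dapply L (dapply (deval c L) f)"
  by (simp add: dapply_deval dapply_sum_right dapply_rconst_mult_right funpow_swap1)

lemma deval_in_centralizer: "deval c L \<in> centralizer L"
  unfolding centralizer_def by (simp, rule dop_eqI_poly) (simp add: dapply_dmult dapply_deval_commute)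

lemma funpow_dapply_0 [simp]: "(dapply L ^^ k) 0 = 0"
  by (induction k) simp_all

lemma funpow_dapply_commute:
  assumes "\<And>f. dapply M (dapply L f) = dapply L (dapply M f)"
  shows "dapply M ((dapply L ^^ k) f) = (dapply L ^^ k) (dapply M f)"
  by (induction k) (simp_all add: assms)

definition raises_poly_degree :: "dop \<Rightarrow> bool" where
  "raises_poly_degree L \<longleftrightarrow>
     (\<forall>p. p \<noteq> 0 \<longrightarrow> (\<exists>q. dapply L (Fract p 1) = Fract q 1 \<and> degree q = Suc (degree p)))"

lemma funpow_dapply_one_poly:
  assumes "raises_poly_degree L"
  shows "\<exists>q. (dapply L ^^ k) 1 = Fract q 1 \<and> q \<noteq> 0 \<and> degree q = k"
proof (induction k)
  case 0
  show ?case by (intro exI[of _ 1]) (simp add: fract_collapse)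
next
  case (Suc k)
  then obtain q where "(dapply L ^^ k) 1 = Fract q 1" "q \<noteq> 0" "degree q = k" by blast
  with assms obtain q' where "(dapply L ^^ Suc k) 1 = Fract q' 1" "degree q' = Suc k"
    by (auto simp: raises_poly_degree_def)
  thus ?case by (intro exI[of _ q']) auto
qed

lemma poly_eq_dapply_deval_one:
  assumes "raises_poly_degree L"
  shows "\<exists>c. Fract q 1 = dapply (deval c L) 1"
proof -
  have "\<exists>c. Fract q 1 = dapply (deval c L) 1" if "degree q \<le> n" for n
    using that
  proof (induction n arbitrary: q)
    case 0
    then obtain x where "q = [:x:]" by (metis degree_0_id le_0_eq)
    hence "Fract q 1 = dapply (deval [:x:] L) 1" by (simp add: dapply_deval rconst_def)
    thus ?case by blast
  next
    case (Suc n)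
    obtain Q where Q: "(dapply L ^^ Suc n) 1 = Fract Q 1" "Q \<noteq> 0" "degree Q = Suc n"
      using funpow_dapply_one_poly[OF assms] by blast
    define x where "x = coeff q (Suc n) / lead_coeff Q"
    define q' where "q' = q - smult x Q"
    have "coeff Q (Suc n) \<noteq> 0" using Q by (metis leading_coeff_0_iff)
    hence top: "coeff q' (Suc n) = 0" using Q by (simp add: q'_def x_def)
    have "degree q' \<le> Suc n"
      using Suc.prems Q by (simp add: q'_def degree_diff_le)
    hence "degree q' \<le> n"
    proof (intro degree_le allI impI)
      fix i assume "n < i"
      thus "coeff q' i = 0" using top \<open>degree q' \<le> Suc n\<close> by (cases "i = Suc n") (auto intro: coeff_eq_0)
    qed
    then obtain c' where c': "Fract q' 1 = dapply (deval c' L) 1" using Suc.IH by blast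
    have "Fract q 1 = Fract q' 1 + rconst x * Fract Q 1"
      by (simp add: q'_def rconst_def)
    also have "\<dots> = dapply (deval (c' + monom x (Suc n)) L) 1"
      by (simp add: c' Q(1)[simplified] deval_add deval_monom dapply_add dapply_smult dapply_dpow)
    finally show ?case by blast
  qed
  thus ?thesis by blast
qed

lemma dapply_one_poly_if_commute:
  assumes "lead_coeff L = 1" "degree L > 0" "has_poly_coeffs L" "raises_poly_degree L"
    and comm: "\<And>f. dapply M (dapply L f) = dapply L (dapply M f)"
  shows "\<exists>q. dapply M 1 = Fract q 1"
proof (rule poly_if_val_ge_0)
  fix \<alpha>
  show "val_ge \<alpha> 0 (dapply M 1)"
  proof (rule ccontr)
    assume "\<not> val_ge \<alpha> 0 (dapply M 1)"
    hence pole: "dapply M 1 \<noteq> 0" "val \<alpha> (dapply M 1) < 0" by (auto simp: val_ge_def)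
    obtain B where B: "\<And>p. val_ge \<alpha> B (dapply M (Fract p 1))"
      and B0: "B \<le> 0" using val_ge_dapply_Fract_1 by blast
    define k where "k = nat (- B)"
    obtain Q where "(dapply L ^^ k) 1 = Fract Q 1"
      using funpow_dapply_one_poly[OF assms(4)] by blast
    hence "val_ge \<alpha> B ((dapply L ^^ k) (dapply M 1))"
      using B[of Q] funpow_dapply_commute[OF comm] by metis
    moreover have "int k \<le> int k * int (degree L)" using assms(2) by (simp add: mult_le_cancel_left1)
    moreover have "int k = - B" using B0 by (simp add: k_def)
    ultimately show False
      using funpow_dapply_val_pole[OF assms(1,3) pole, of k] pole(2) by (simp add: val_ge_def)
  qed
qed

theorem centralizer_eq_deval:
  assumes "lead_coeff L = 1" "degree L > 0" "has_poly_coeffs L" "raises_poly_degree L"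
  shows "centralizer L = {deval c L | c. True}"
proof (intro equalityI subsetI)
  fix M assume "M \<in> centralizer L"
  hence "dmult M L = dmult L M" by (simp add: centralizer_def)
  hence comm: "dapply M (dapply L f) = dapply L (dapply M f)" for f
    by (metis dapply_dmult)
  obtain q where "dapply M 1 = Fract q 1"
    using dapply_one_poly_if_commute[OF assms comm] by blast
  then obtain c where c: "dapply M 1 = dapply (deval c L) 1"
    using poly_eq_dapply_deval_one[OF assms(4)] by metis
  define N where "N = M - deval c L"
  have commN: "dapply N (dapply L f) = dapply L (dapply N f)" for f
    by (simp add: N_def dapply_diff dapply_diff_right comm dapply_deval_commute)
  have N1: "dapply N 1 = 0" using c by (simp add: N_def dapply_diff)
  have "dapply N (Fract p 1) = 0" for p
  proof -
    obtain c' where c': "Fract p 1 = dapply (deval c' L) 1"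
      using poly_eq_dapply_deval_one[OF assms(4)] by blast
    show ?thesis
      by (simp add: c' dapply_deval dapply_sum_right dapply_rconst_mult_right
          funpow_dapply_commute[OF commN] N1)
  qed
  hence "N = 0" by (intro dop_eqI_poly) simp
  thus "M \<in> {deval c L | c. True}" by (auto simp: N_def)
qed (auto simp: deval_in_centralizer)

section \<open>Orders of operators\<close>

lemma coeff_dmult:
  "coeff (dmult A B) n = (\<Sum>i\<le>degree A. \<Sum>j\<le>degree B. \<Sum>k\<le>i.
     if i + j - k = n then coeff A i * of_nat (i choose k) * (rderiv ^^ k) (coeff B j) else 0)"
  by (simp add: dmult_def coeff_sum coeff_monom)

lemma degree_dmult_le: "degree (dmult A B) \<le> degree A + degree B"
  by (rule degree_le) (auto simp: coeff_dmult intro!: sum.neutral)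

lemma coeff_dmult_degree_add:
  "coeff (dmult A B) (degree A + degree B) = lead_coeff A * lead_coeff B"
proof -
  have "coeff (dmult A B) (degree A + degree B) = (\<Sum>i\<le>degree A. \<Sum>j\<le>degree B. \<Sum>k\<le>i.
     if k = 0 then if j = degree B then if i = degree A then coeff A i * coeff B j else 0 else 0 else 0)"
    unfolding coeff_dmult by (intro sum.cong refl) auto
  also have "\<dots> = lead_coeff A * lead_coeff B" by simp
  finally show ?thesis .
qed

lemma dmult_monic:
  assumes "lead_coeff A = 1" "lead_coeff B = 1"
  shows "degree (dmult A B) = degree A + degree B \<and> lead_coeff (dmult A B) = 1"
proof -
  have top: "coeff (dmult A B) (degree A + degree B) = 1"
    using coeff_dmult_degree_add[of A B] assms by simp
  hence "degree (dmult A B) = degree A + degree B"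
    using degree_dmult_le[of A B] le_degree[of "dmult A B"] by (simp add: le_antisym)
  thus ?thesis using top by simp
qed

lemma dpow_monic:
  assumes "lead_coeff L = 1"
  shows "degree (dpow L k) = k * degree L \<and> lead_coeff (dpow L k) = 1"
proof (induction k)
  case (Suc k)
  hence IH: "degree (dpow L k) = k * degree L" "lead_coeff (dpow L k) = 1" by auto
  have "dpow L (Suc k) = dmult L (dpow L k)" by (simp add: dpow_def)
  with dmult_monic[OF assms IH(2)] IH(1) show ?case by (metis mult_Suc)
qed (simp add: dpow_def)

lemma degree_deval_monic:
  assumes "lead_coeff L = 1" "degree L > 0"
  shows "degree (deval c L) = degree c * degree L"
proof (cases "c = 0")
  case False
  define n where "n = degree c"
  have dpow: "degree (dpow L k) = k * degree L" "coeff (dpow L k) (k * degree L) = 1" for k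
    using dpow_monic[OF assms(1), of k] by auto
  have le: "degree (smult (rconst (coeff c k)) (dpow L k)) \<le> n * degree L" if "k \<le> n" for k
    using that dpow(1)[of k] by (intro order.trans[OF degree_smult_le]) simp
  have "coeff (deval c L) (n * degree L) = (\<Sum>k\<le>n. if k = n then rconst (coeff c n) else 0)"
  proof (unfold deval_def n_def[symmetric] coeff_sum, intro sum.cong refl)
    fix k assume "k \<in> {..n}"
    thus "coeff (smult (rconst (coeff c k)) (dpow L k)) (n * degree L)
        = (if k = n then rconst (coeff c n) else 0)"
      using dpow[of k] assms(2) le[of k] by (auto simp: coeff_eq_0)
  qed
  hence "coeff (deval c L) (n * degree L) \<noteq> 0" using False by (simp add: n_def)
  moreover have "degree (deval c L) \<le> n * degree L"
    unfolding deval_def n_def[symmetric] by (rule degree_sum_le) (simp_all only: atMost_iff le finite_atMost)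
  ultimately show ?thesis by (simp add: n_def le_antisym le_degree)
qed (simp add: deval_def)

lemma op_rank_deval_monic:
  assumes "lead_coeff L = 1" "degree L > 0"
  shows "op_rank {deval c L | c. True} = degree L"
proof -
  have "dord ` {deval c L | c. True} = (*) (degree L) ` range (degree :: complex poly \<Rightarrow> nat)"
    by (auto simp: dord_def degree_deval_monic[OF assms] image_def mult.commute)
  also have "range (degree :: complex poly \<Rightarrow> nat) = UNIV"
    by (metis UNIV_eq_I degree_monom_eq one_neq_zero rangeI)
  finally show ?thesis by (simp add: op_rank_def Gcd_mult)
qed

section \<open>The operator L0\<close>

lemma L0_monic:
  assumes "r > 1"
  shows "degree (L0 r a) = r \<and> lead_coeff (L0 r a) = 1"
proof -
  have top: "coeff (L0 r a) r = 1"
    using assms by (cases r) (simp_all add: L0_def coeff_sum coeff_monom)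
  have "degree (L0 r a) \<le> r" unfolding L0_def
    by (intro degree_diff_le degree_sum_le) (auto intro: order.trans[OF degree_monom_le])
  moreover have "r \<le> degree (L0 r a)" using top by (intro le_degree) simp
  ultimately show ?thesis using top by simp
qed

lemma L0_has_poly_coeffs: "has_poly_coeffs (L0 r a)"
proof -
  have "L0 r a = monom (Fract 1 1) r - (\<Sum>k\<in>{1..r-2}. monom (Fract [:a k:] 1) k)
                 - monom (Fract [:0, 1:] 1) 0"
    by (simp add: L0_def rconst_def rx_def monom_0 fract_collapse)
  thus ?thesis by (simp only:) (intro has_poly_coeffs_diff has_poly_coeffs_sum has_poly_coeffs_monom)
qed

lemma L0_raises_poly_degree: "raises_poly_degree (L0 r a)"
  unfolding raises_poly_degree_def
proof (intro allI impI)
  fix p :: "complex poly" assume "p \<noteq> 0"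
  define low where "low = (pderiv ^^ r) p - (\<Sum>k\<in>{1..r-2}. smult (a k) ((pderiv ^^ k) p))"
  have action: "dapply (L0 r a) (Fract p 1) = Fract (low - pCons 0 p) 1"
    by (simp add: L0_def low_def dapply_diff dapply_sum dapply_monom dapply_eq_sum[of "[:_:]" 0]
        higher_rderiv_Fract_1 rconst_def rx_def sum_Fract_1)
  have "degree low \<le> degree p" unfolding low_def
    by (intro degree_diff_le degree_sum_le)
      (auto simp: degree_higher_pderiv intro: order.trans[OF degree_smult_le])
  hence "degree low < degree (- pCons 0 p)" using \<open>p \<noteq> 0\<close> by simp
  hence "degree (low - pCons 0 p) = degree (- pCons 0 p)"
    by (metis degree_add_eq_right diff_conv_add_uminus)
  hence "degree (low - pCons 0 p) = Suc (degree p)" using \<open>p \<noteq> 0\<close> by simp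
  with action show "\<exists>q. dapply (L0 r a) (Fract p 1) = Fract q 1 \<and> degree q = Suc (degree p)"
    by blast
qed

theorem mainTheorem14:
  fixes r :: nat and a :: "nat \<Rightarrow> complex"
  assumes "r > 1"
  shows "centralizer (L0 r a) = {deval p (L0 r a) | p. True}
         \<and> true_rank (L0 r a) = r"
proof -
  have L0: "lead_coeff (L0 r a) = 1" "degree (L0 r a) > 0" "degree (L0 r a) = r"
    using L0_monic[OF assms, of a] assms by auto
  have centralizer_L0: "centralizer (L0 r a) = {deval p (L0 r a) | p. True}"
    by (rule centralizer_eq_deval[OF L0(1,2) L0_has_poly_coeffs L0_raises_poly_degree])
  moreover have "true_rank (L0 r a) = r"
    using op_rank_deval_monic[OF L0(1,2)] L0(3) by (simp add: true_rank_def centralizer_L0)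
  ultimately show ?thesis ..
qed

end
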